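(* Let $M$ be a finite-dimensional left $\mathsf{VBr}_{r,t}(\omega)$-module with decomposition $M=\bigoplus_{\mathbf a,\mathbf i}1_{\mathbf a}M_{\mathbf i}$. Let $\mathbf a\in\mathrm{Seq}_{r,t}$, $k\in\{1,\dots,r+t-1\}$ with $\mathsf s_k\mathbf a\neq\mathbf a$, and $\mathbf i\in\mathbb C^{r+t}$. Let $I=\{\mathbf i'\in\mathbb C^{r+t}:\mathrm i'_j=\mathrm i_j\text{ for }j\ne k,k+1,\ \mathrm i'_k+\mathrm i'_{k+1}=0\}$. Then $e_k1_{\mathbf a}M_{\mathbf i}=\{0\}$ if $\mathrm i_k+\mathrm i_{k+1}\neq0$, and $e_k1_{\mathbf a}M_{\mathbf i}\subseteq\bigoplus_{\mathbf i'\in I}1_{\mathbf a}M_{\mathbf i'}$ if $\mathrm i_k+\mathrm i_{k+1}=0$; analogously $\hat e_k1_{\mathbf a}M_{\mathbf i}=\{0\}$ if $\mathrm i_k+\mathrm i_{k+1}\ne0$ and $\hat e_k1_{\mathbf a}M_{\mathbf i}\subseteq\bigoplus_{\mathbf i'\in I}1_{\mathsf s_k\mathbf a}M_{\mathbf i'}$ if $\mathrm i_k+\mathrm i_{k+1}=0$.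
   Context: $\mathrm{Seq}_{r,t}$: sequences $\mathbf a\in\{\wedge,\vee\}^{r+t}$ with exactly $r$ entries $\wedge$; $J=\{1,\dots,r+t-1\}$; $\mathsf s_k$ swaps entries $k,k+1$. $\mathrm{Br}_{r,t}(\gamma)$: basis oriented Brauer diagrams $\mathbf a\to\mathbf b$ (perfect matchings between bottom row labelled $\mathbf a$ and top row labelled $\mathbf b$; bottom-to-top strands join equal labels, strands within a row join different labels), product by stacking (second factor below), $0$ if labels mismatch, loops replaced by $\gamma$. $1_{\mathbf a}$ identity; for $k\in J$: if $a_k=a_{k+1}$, $s_k1_{\mathbf a}$ crosses strands $k,k+1$ ($\mathbf a\to\mathbf a$); if $a_k\neq a_{k+1}$, $\hat s_k1_{\mathbf a}$ crossing $\mathbf a\to\mathsf s_k\mathbf a$, $e_k1_{\mathbf a}$ cap at bottom $k,k+1$ and cup at top $k,k+1$ ($\mathbf a\to\mathbf a$), $\hat e_k1_{\mathbf a}$ same shape $\mathbf a\to\mathsf s_k\mathbf a$; these are $0$ when the condition fails; $s_k=\sum_{\mathbf a}s_k1_{\mathbf a}$ etc. For $\omega=(\omega_j)_{j\ge0}\subset\mathbb C$, $\mathsf{VBr}_{r,t}(\omega)$ is the quotient of the free product $\mathrm{Br}_{r,t}(\omega_0)*\mathbb C[y_1,\dots,y_{r+t}]$ by: $y_i$ commutes with all $1_{\mathbf a}$, and with $s_k,\hat s_k,e_k,\hat e_k$ when $i\notin\{k,k+1\}$; $e_1y_1^je_11_{\mathbf a}=\omega_je_11_{\mathbf a}$ for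 $j\ge0$ and $(a_1,a_2)=(\wedge,\vee)$; for $a_k=a_{k+1}$: $s_ky_k1_{\mathbf a}-y_{k+1}s_k1_{\mathbf a}=-1_{\mathbf a}$, $s_ky_{k+1}1_{\mathbf a}-y_ks_k1_{\mathbf a}=1_{\mathbf a}$; $\hat s_ky_k-y_{k+1}\hat s_k=\hat e_k$, $\hat s_ky_{k+1}-y_k\hat s_k=-\hat e_k$; $e_k,\hat e_k$ are annihilated on both sides by $y_k+y_{k+1}$. $1_{\mathbf a}M_{\mathbf i}=\{v\in1_{\mathbf a}M:(y_k-\mathrm i_k)^Nv=0\ \forall k,\ N\gg0\}$. *)

theory Defs
  imports Main "HOL.Complex"
begin

text \<open>Labels: True stands for the up-arrow (wedge), False for the down-arrow (vee).
  A sequence a in Seq r t is a list of length r+t; its entry at position j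
  (1-based, as in the paper) is a ! (j - 1).\<close>

definition Seq :: "nat \<Rightarrow> nat \<Rightarrow> bool list set" where
  "Seq r t = {a. length a = r + t \<and> length (filter id a) = r}"

abbreviation ent :: "bool list \<Rightarrow> nat \<Rightarrow> bool" where
  "ent a j \<equiv> a ! (j - 1)"

definition sw :: "nat \<Rightarrow> nat \<Rightarrow> nat" where
  "sw k j = (if j = k then k + 1 else if j = k + 1 then k else j)"

definition seq_swap :: "nat \<Rightarrow> bool list \<Rightarrow> bool list" where
  "seq_swap k a = map (\<lambda>j. ent a (sw k (j + 1))) [0..<length a]"

section \<open>Oriented Brauer diagrams\<close>

datatype pt = Bot nat | Top nat

definition pts :: "nat \<Rightarrow> pt set" where
  "pts n = Bot ` {1..n} \<union> Top ` {1..n}"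

fun is_bot :: "pt \<Rightarrow> bool" where
  "is_bot (Bot i) = True" | "is_bot (Top i) = False"

fun lab :: "bool list \<Rightarrow> bool list \<Rightarrow> pt \<Rightarrow> bool" where
  "lab a b (Bot i) = ent a i" | "lab a b (Top i) = ent b i"

text \<open>A diagram (a, b, m) from a (bottom row) to b (top row): m is the perfect matching,
  given as a fixed-point-free involution of the 2(r+t) points (identity outside them).\<close>
type_synonym diag = "bool list \<times> bool list \<times> (pt \<Rightarrow> pt)"

definition is_diag :: "nat \<Rightarrow> nat \<Rightarrow> diag \<Rightarrow> bool" where
  "is_diag r t d = (case d of (a, b, m) \<Rightarrow>
     a \<in> Seq r t \<and> b \<in> Seq r t \<and>
     (\<forall>p\<in>pts (r + t). m p \<in> pts (r + t) \<and> m p \<noteq> p \<and> m (m p) = p) \<and>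
     (\<forall>p. p \<notin> pts (r + t) \<longrightarrow> m p = p) \<and>
     (\<forall>p\<in>pts (r + t). (is_bot p = is_bot (m p)) \<longleftrightarrow> lab a b p \<noteq> lab a b (m p)))"

definition Diags :: "nat \<Rightarrow> nat \<Rightarrow> diag set" where
  "Diags r t = {d. is_diag r t d}"

datatype gpt = Lo nat | Mi nat | Up nat

fun emb_low :: "pt \<Rightarrow> gpt" where
  "emb_low (Bot i) = Lo i" | "emb_low (Top i) = Mi i"

fun emb_up :: "pt \<Rightarrow> gpt" where
  "emb_up (Bot i) = Mi i" | "emb_up (Top i) = Up i"

fun outer :: "pt \<Rightarrow> gpt" where
  "outer (Bot i) = Lo i" | "outer (Top i) = Up i"

definition glue_edges :: "nat \<Rightarrow> (pt \<Rightarrow> pt) \<Rightarrow> (pt \<Rightarrow> pt) \<Rightarrow> (gpt \<times> gpt) set" where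
  "glue_edges n m1 m2 =
     {(emb_low p, emb_low (m2 p)) | p. p \<in> pts n} \<union> {(emb_up p, emb_up (m1 p)) | p. p \<in> pts n}"

definition comp_match :: "nat \<Rightarrow> (pt \<Rightarrow> pt) \<Rightarrow> (pt \<Rightarrow> pt) \<Rightarrow> pt \<Rightarrow> pt" where
  "comp_match n m1 m2 p =
     (if p \<in> pts n
      then (THE q. q \<in> pts n \<and> q \<noteq> p \<and> (outer p, outer q) \<in> (glue_edges n m1 m2)\<^sup>*)
      else p)"

text \<open>Number of closed loops: connected components lying entirely in the middle row.\<close>
definition n_loops :: "nat \<Rightarrow> (pt \<Rightarrow> pt) \<Rightarrow> (pt \<Rightarrow> pt) \<Rightarrow> nat" where
  "n_loops n m1 m2 =
     card {C. \<exists>x\<in>Mi ` {1..n}. C = ((glue_edges n m1 m2)\<^sup>*) `` {x} \<and> C \<subseteq> Mi ` {1..n}}"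

text \<open>Stacking d1 (upper, b \<rightarrow> c) on top of d2 (lower, a \<rightarrow> b') when b = b'.\<close>
definition stack :: "nat \<Rightarrow> diag \<Rightarrow> diag \<Rightarrow> diag" where
  "stack n d1 d2 = (case d1 of (b, c, m1) \<Rightarrow> case d2 of (a, b', m2) \<Rightarrow>
     (a, c, comp_match n m1 m2))"

definition loops :: "nat \<Rightarrow> diag \<Rightarrow> diag \<Rightarrow> nat" where
  "loops n d1 d2 = (case d1 of (b, c, m1) \<Rightarrow> case d2 of (a, b', m2) \<Rightarrow> n_loops n m1 m2)"

definition composable :: "diag \<Rightarrow> diag \<Rightarrow> bool" where
  "composable d1 d2 = (fst d1 = fst (snd d2))"

definition restr :: "nat \<Rightarrow> (pt \<Rightarrow> pt) \<Rightarrow> pt \<Rightarrow> pt" where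
  "restr n f p = (if p \<in> pts n then f p else p)"

fun straight :: "pt \<Rightarrow> pt" where
  "straight (Bot i) = Top i" | "straight (Top i) = Bot i"

fun cross_k :: "nat \<Rightarrow> pt \<Rightarrow> pt" where
  "cross_k k (Bot i) = Top (sw k i)" | "cross_k k (Top i) = Bot (sw k i)"

fun capcup_k :: "nat \<Rightarrow> pt \<Rightarrow> pt" where
  "capcup_k k (Bot i) = (if i = k \<or> i = k + 1 then Bot (sw k i) else Top i)"
| "capcup_k k (Top i) = (if i = k \<or> i = k + 1 then Top (sw k i) else Bot i)"

text \<open>1_a, s_k 1_a, \<hat>s_k 1_a, e_k 1_a, \<hat>e_k 1_a (n = length a).\<close>
definition id_d :: "bool list \<Rightarrow> diag" where
  "id_d a = (a, a, restr (length a) straight)"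

definition s_d :: "nat \<Rightarrow> bool list \<Rightarrow> diag" where
  "s_d k a = (a, a, restr (length a) (cross_k k))"

definition sh_d :: "nat \<Rightarrow> bool list \<Rightarrow> diag" where
  "sh_d k a = (a, seq_swap k a, restr (length a) (cross_k k))"

definition e_d :: "nat \<Rightarrow> bool list \<Rightarrow> diag" where
  "e_d k a = (a, a, restr (length a) (capcup_k k))"

definition eh_d :: "nat \<Rightarrow> bool list \<Rightarrow> diag" where
  "eh_d k a = (a, seq_swap k a, restr (length a) (capcup_k k))"

section \<open>Modules over VBr_{r,t}(\<omega>)\<close>

text \<open>s_k = sum over a of s_k 1_a (over those a where the diagram is defined), etc.,
  acting on M through rho.\<close>
definition opS :: "nat \<Rightarrow> nat \<Rightarrow> (diag \<Rightarrow> 'v::ab_group_add \<Rightarrow> 'v) \<Rightarrow> nat \<Rightarrow> 'v \<Rightarrow> 'v" where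
  "opS r t rho k v = (\<Sum>a\<in>{a\<in>Seq r t. ent a k = ent a (k + 1)}. rho (s_d k a) v)"

definition opSh :: "nat \<Rightarrow> nat \<Rightarrow> (diag \<Rightarrow> 'v::ab_group_add \<Rightarrow> 'v) \<Rightarrow> nat \<Rightarrow> 'v \<Rightarrow> 'v" where
  "opSh r t rho k v = (\<Sum>a\<in>{a\<in>Seq r t. ent a k \<noteq> ent a (k + 1)}. rho (sh_d k a) v)"

definition opE :: "nat \<Rightarrow> nat \<Rightarrow> (diag \<Rightarrow> 'v::ab_group_add \<Rightarrow> 'v) \<Rightarrow> nat \<Rightarrow> 'v \<Rightarrow> 'v" where
  "opE r t rho k v = (\<Sum>a\<in>{a\<in>Seq r t. ent a k \<noteq> ent a (k + 1)}. rho (e_d k a) v)"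

definition opEh :: "nat \<Rightarrow> nat \<Rightarrow> (diag \<Rightarrow> 'v::ab_group_add \<Rightarrow> 'v) \<Rightarrow> nat \<Rightarrow> 'v \<Rightarrow> 'v" where
  "opEh r t rho k v = (\<Sum>a\<in>{a\<in>Seq r t. ent a k \<noteq> ent a (k + 1)}. rho (eh_d k a) v)"

text \<open>A finite-dimensional left VBr_{r,t}(omega)-module: a finite-dimensional complex vector
  space (scale, with basis B) together with a unital representation rho of
  Br_{r,t}(omega 0) (given on the diagram basis: linear operators multiplying by the
  stacking rule, with the unit sum of 1_a acting as identity) and commuting linear
  operators Y 1, ..., Y (r+t) (a representation of C[y_1,...,y_{r+t}]) such that the
  defining relations of VBr_{r,t}(omega) hold.\<close>
definition VBr_module ::
  "nat \<Rightarrow> nat \<Rightarrow> (nat \<Rightarrow> complex) \<Rightarrow> (complex \<Rightarrow> 'v::ab_group_add \<Rightarrow> 'v) \<Rightarrow> 'v set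
   \<Rightarrow> (diag \<Rightarrow> 'v \<Rightarrow> 'v) \<Rightarrow> (nat \<Rightarrow> 'v \<Rightarrow> 'v) \<Rightarrow> bool" where
  "VBr_module r t \<omega> scale B rho Y \<longleftrightarrow>
     finite_dimensional_vector_space scale B \<and>
     \<comment> \<open>representation of the oriented Brauer algebra\<close>
     (\<forall>d\<in>Diags r t. Vector_Spaces.linear scale scale (rho d)) \<and>
     (\<forall>d1\<in>Diags r t. \<forall>d2\<in>Diags r t. \<forall>v.
        rho d1 (rho d2 v) =
          (if composable d1 d2
           then scale ((\<omega> 0) ^ loops (r + t) d1 d2) (rho (stack (r + t) d1 d2) v)
           else 0)) \<and>
     (\<forall>v. (\<Sum>a\<in>Seq r t. rho (id_d a) v) = v) \<and>
     \<comment> \<open>representation of the polynomial ring\<close>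
     (\<forall>i\<in>{1..r + t}. Vector_Spaces.linear scale scale (Y i)) \<and>
     (\<forall>i\<in>{1..r + t}. \<forall>j\<in>{1..r + t}. \<forall>v. Y i (Y j v) = Y j (Y i v)) \<and>
     \<comment> \<open>y_i commutes with all 1_a\<close>
     (\<forall>i\<in>{1..r + t}. \<forall>a\<in>Seq r t. \<forall>v. Y i (rho (id_d a) v) = rho (id_d a) (Y i v)) \<and>
     \<comment> \<open>y_i commutes with s_k, hat s_k, e_k, hat e_k for i not in {k, k+1}\<close>
     (\<forall>i\<in>{1..r + t}. \<forall>k\<in>{1..r + t - 1}. i \<noteq> k \<and> i \<noteq> k + 1 \<longrightarrow> (\<forall>v.
        Y i (opS r t rho k v) = opS r t rho k (Y i v) \<and>
        Y i (opSh r t rho k v) = opSh r t rho k (Y i v) \<and>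
        Y i (opE r t rho k v) = opE r t rho k (Y i v) \<and>
        Y i (opEh r t rho k v) = opEh r t rho k (Y i v))) \<and>
     \<comment> \<open>e_1 y_1^j e_1 1_a = omega_j e_1 1_a for (a_1, a_2) = (wedge, vee)\<close>
     (\<forall>j. \<forall>a\<in>Seq r t. ent a 1 \<and> \<not> ent a 2 \<longrightarrow> (\<forall>v.
        opE r t rho 1 ((Y 1 ^^ j) (opE r t rho 1 (rho (id_d a) v))) =
        scale (\<omega> j) (opE r t rho 1 (rho (id_d a) v)))) \<and>
     \<comment> \<open>degenerate affine Hecke type relations for a_k = a_{k+1}\<close>
     (\<forall>k\<in>{1..r + t - 1}. \<forall>a\<in>Seq r t. ent a k = ent a (k + 1) \<longrightarrow> (\<forall>v.
        opS r t rho k (Y k (rho (id_d a) v)) - Y (k + 1) (opS r t rho k (rho (id_d a) v))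
          = - rho (id_d a) v \<and>
        opS r t rho k (Y (k + 1) (rho (id_d a) v)) - Y k (opS r t rho k (rho (id_d a) v))
          = rho (id_d a) v)) \<and>
     \<comment> \<open>relations for hat s_k\<close>
     (\<forall>k\<in>{1..r + t - 1}. \<forall>v.
        opSh r t rho k (Y k v) - Y (k + 1) (opSh r t rho k v) = opEh r t rho k v \<and>
        opSh r t rho k (Y (k + 1) v) - Y k (opSh r t rho k v) = - opEh r t rho k v) \<and>
     \<comment> \<open>e_k and hat e_k are annihilated on both sides by y_k + y_{k+1}\<close>
     (\<forall>k\<in>{1..r + t - 1}. \<forall>v.
        opE r t rho k (Y k v + Y (k + 1) v) = 0 \<and>
        Y k (opE r t rho k v) + Y (k + 1) (opE r t rho k v) = 0 \<and>
        opEh r t rho k (Y k v + Y (k + 1) v) = 0 \<and>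
        Y k (opEh r t rho k v) + Y (k + 1) (opEh r t rho k v) = 0)"

definition wsp ::
  "nat \<Rightarrow> nat \<Rightarrow> (complex \<Rightarrow> 'v::ab_group_add \<Rightarrow> 'v) \<Rightarrow> (diag \<Rightarrow> 'v \<Rightarrow> 'v)
   \<Rightarrow> (nat \<Rightarrow> 'v \<Rightarrow> 'v) \<Rightarrow> bool list \<Rightarrow> (nat \<Rightarrow> complex) \<Rightarrow> 'v set" where
  "wsp r t scale rho Y a i =
     {v. rho (id_d a) v = v \<and>
         (\<forall>k\<in>{1..r + t}. \<exists>N. ((\<lambda>w. Y k w - scale (i k) w) ^^ N) v = 0)}"

end

theory Submission
  imports Defs "HOL-Computational_Algebra.Fundamental_Theorem_Algebra"
    "HOL-Computational_Algebra.Polynomial_Factorial" "HOL-Computational_Algebra.Field_as_Ring"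
begin

text \<open>Write \<open>e\<close> for \<open>e_k\<close> or \<open>hat e_k\<close>; both are killed on either side by \<open>y_k + y_{k+1}\<close> and
  commute with the other \<open>y_j\<close>. For a simultaneous generalized eigenvector \<open>v\<close>, with
  \<open>A = y_k - i_k\<close> and \<open>B = y_{k+1} - i_{k+1}\<close> one has
  \<open>(i_k + i_{k+1}) e v = - e (A v) - e (B v)\<close>, so induction on the nilpotency orders of \<open>A\<close>
  and \<open>B\<close> on \<open>v\<close> gives \<open>e v = 0\<close> unless \<open>i_k + i_{k+1} = 0\<close>. In general \<open>w = e v\<close> keeps
  the eigenvalues \<open>i_j\<close>, \<open>j \<noteq> k, k+1\<close>, and satisfies \<open>y_{k+1} w = - y_k w\<close>. Splitting \<open>w\<close>
  into generalized eigenvectors \<open>q(y_k) w\<close> of \<open>y_k\<close> (via an annihilating polynomial and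
  Bezout), each component inherits these properties, and its \<open>y_{k+1}\<close>-eigenvalue is
  minus its \<open>y_k\<close>-eigenvalue.\<close>

definition poly_op ::
  "('a::comm_ring_1 \<Rightarrow> 'b::ab_group_add \<Rightarrow> 'b) \<Rightarrow> ('b \<Rightarrow> 'b) \<Rightarrow> 'a poly \<Rightarrow> 'b \<Rightarrow> 'b" where
  "poly_op scale T p w = (\<Sum>j\<le>degree p. scale (coeff p j) ((T ^^ j) w))"

definition gen_eigenspace ::
  "('a::comm_ring_1 \<Rightarrow> 'b::ab_group_add \<Rightarrow> 'b) \<Rightarrow> ('b \<Rightarrow> 'b) \<Rightarrow> 'a \<Rightarrow> 'b set" where
  "gen_eigenspace scale T l = {u. \<exists>N. ((\<lambda>x. T x - scale l x) ^^ N) u = 0}"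

context vector_space
begin

lemma module_hom_self_iff:
  "module_hom scale scale f \<longleftrightarrow>
    (\<forall>x y. f (x + y) = f x + f y) \<and> (\<forall>c x. f (c *s x) = c *s f x)"
  unfolding module_hom_def module_hom_axioms_def
  using module_iff_vector_space vector_space_axioms by auto

lemma module_hom_shift:
  "module_hom scale scale T \<Longrightarrow> module_hom scale scale (\<lambda>x. T x - c *s x)"
  by (simp add: module_hom_self_iff module_hom.add module_hom.scale algebra_simps)

lemma module_hom_funpow:
  "module_hom scale scale T \<Longrightarrow> module_hom scale scale (T ^^ n)"
  by (induction n) (simp_all add: module_hom_self_iff module_hom.add module_hom.scale)

lemma funpow_commute: "(\<And>x. T (S x) = S (T x)) \<Longrightarrow> (T ^^ n) (S x) = S ((T ^^ n) x)"
  by (induction n) auto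

lemma poly_op_conv_sum:
  fixes p :: "'a poly"
  shows "degree p \<le> N \<Longrightarrow> poly_op scale T p w = (\<Sum>j\<le>N. coeff p j *s (T ^^ j) w)"
  unfolding poly_op_def by (rule sum.mono_neutral_left) (auto simp: coeff_eq_0)

lemma poly_op_0 [simp]: "poly_op scale T 0 w = 0"
  by (simp add: poly_op_def)

lemma poly_op_monom: "poly_op scale T (monom c n) w = c *s (T ^^ n) w"
proof -
  have "poly_op scale T (monom c n) w = (\<Sum>j\<le>n. coeff (monom c n) j *s (T ^^ j) w)"
    by (rule poly_op_conv_sum) (simp add: degree_monom_le)
  also have "\<dots> = c *s (T ^^ n) w"
    by (simp add: if_distrib[of "\<lambda>c. c *s _"] cong: if_cong)
  finally show ?thesis .
qed

context
  fixes T assumes T: "module_hom scale scale T"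
begin

lemma poly_op_pCons: "poly_op scale T (pCons c p) w = c *s w + T (poly_op scale T p w)"
proof -
  have "poly_op scale T (pCons c p) w = (\<Sum>j\<le>Suc (degree p). coeff (pCons c p) j *s (T ^^ j) w)"
    by (rule poly_op_conv_sum) (simp add: degree_pCons_le)
  also have "\<dots> = c *s w + (\<Sum>j\<le>degree p. coeff p j *s (T ^^ Suc j) w)"
    by (subst sum.atMost_Suc_shift) simp
  also have "(\<Sum>j\<le>degree p. coeff p j *s (T ^^ Suc j) w) = T (poly_op scale T p w)"
    unfolding poly_op_def by (simp add: module_hom.sum[OF T] module_hom.scale[OF T])
  finally show ?thesis .
qed

lemma module_hom_poly_op: "module_hom scale scale (poly_op scale T p)"
proof -
  have "poly_op scale T p (x + y) = poly_op scale T p x + poly_op scale T p y"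
    and "poly_op scale T p (c *s x) = c *s poly_op scale T p x" for x y c
    by (induction p rule: pCons_induct)
      (simp_all add: poly_op_pCons module_hom.add[OF T] module_hom.scale[OF T] algebra_simps)
  then show ?thesis by (simp add: module_hom_self_iff)
qed

lemma poly_op_add: "poly_op scale T (p + q) w = poly_op scale T p w + poly_op scale T q w"
proof (induction p arbitrary: q rule: pCons_induct)
  case (pCons c p)
  show ?case
  proof (cases q rule: pCons_cases)
    case (pCons d q')
    then show ?thesis using pCons.IH[of q']
      by (simp add: poly_op_pCons module_hom.add[OF T] algebra_simps)
  qed
qed simp

lemma poly_op_diff: "poly_op scale T (p - q) w = poly_op scale T p w - poly_op scale T q w"
  using poly_op_add[of "p - q" q w] by (simp add: eq_diff_eq)

lemma poly_op_sum: "poly_op scale T (\<Sum>j\<in>A. f j) w = (\<Sum>j\<in>A. poly_op scale T (f j) w)"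
  by (induction A rule: infinite_finite_induct) (simp_all add: poly_op_add)

lemma poly_op_smult: "poly_op scale T (smult c p) w = c *s poly_op scale T p w"
  by (induction p rule: pCons_induct)
    (simp_all add: poly_op_pCons module_hom.scale[OF T] module_hom.zero[OF T] scale_right_distrib)

lemma poly_op_mult: "poly_op scale T (p * q) w = poly_op scale T p (poly_op scale T q w)"
  by (induction p rule: pCons_induct) (simp_all add: poly_op_add poly_op_smult poly_op_pCons)

lemma poly_op_1: "poly_op scale T 1 w = w"
  by (simp add: one_pCons poly_op_pCons module_hom.zero[OF T])

lemma poly_op_linear_power: "poly_op scale T ([:-l, 1:] ^ m) w = ((\<lambda>x. T x - l *s x) ^^ m) w"
proof (induction m arbitrary: w)
  case (Suc m)
  have "poly_op scale T [:-l, 1:] w = T w - l *s w" for w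
    by (simp add: poly_op_pCons module_hom.zero[OF T])
  with Suc show ?case by (simp only: power_Suc poly_op_mult funpow.simps o_apply)
qed (simp add: poly_op_1)

lemma poly_op_commute:
  assumes S: "module_hom scale scale S" and ST: "\<And>x. S (T x) = T (S x)"
  shows "S (poly_op scale T p w) = poly_op scale T p (S w)"
  by (induction p rule: pCons_induct)
    (simp_all add: poly_op_pCons module_hom.add[OF S] module_hom.scale[OF S]
      module_hom.zero[OF S] ST)

end

lemma gen_eigenspace_map_commute:
  assumes S: "module_hom scale scale S" and ST: "\<And>x. S (T x) = T (S x)"
    and u: "u \<in> gen_eigenspace scale T l"
  shows "S u \<in> gen_eigenspace scale T l"
proof -
  obtain N where N: "((\<lambda>x. T x - l *s x) ^^ N) u = 0"
    using u by (auto simp: gen_eigenspace_def)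
  have "((\<lambda>x. T x - l *s x) ^^ N) (S u) = S (((\<lambda>x. T x - l *s x) ^^ N) u)"
    by (rule funpow_commute) (simp add: module_hom.diff[OF S] module_hom.scale[OF S] ST)
  with N show ?thesis by (auto simp: gen_eigenspace_def module_hom.zero[OF S])
qed

text \<open>On the subspace where \<open>Tb = - Ta\<close>, which is invariant under both operators,
  \<open>Tb + l\<close> acts as \<open>- (Ta - l)\<close>.\<close>
lemma gen_eigenspace_opposite:
  assumes Ta: "module_hom scale scale Ta" and Tb: "module_hom scale scale Tb"
    and comm: "\<And>x. Ta (Tb x) = Tb (Ta x)"
    and opp: "Tb u = - Ta u" and u: "u \<in> gen_eigenspace scale Ta l"
  shows "u \<in> gen_eigenspace scale Tb (- l)"
proof -
  define A where "A = (\<lambda>x. Ta x - l *s x)"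
  define B where "B = (\<lambda>x. Tb x - (- l) *s x)"
  have mB: "module_hom scale scale (B ^^ m)" for m
    unfolding B_def by (intro module_hom_funpow module_hom_shift Tb)
  have "(B ^^ m) u = (if even m then (A ^^ m) u else - (A ^^ m) u)" if "Tb u = - Ta u" for m u
    using that
  proof (induction m arbitrary: u)
    case (Suc m)
    have "Tb (A u) = - Ta (A u)"
      unfolding A_def
      by (simp add: module_hom.diff[OF Ta] module_hom.diff[OF Tb] module_hom.scale[OF Ta]
          module_hom.scale[OF Tb] Suc.prems comm[symmetric] module_hom.neg[OF Ta])
    then have IH: "(B ^^ m) (A u) = (if even m then (A ^^ Suc m) u else - (A ^^ Suc m) u)"
      using Suc.IH[of "A u"] by (simp add: funpow_swap1)
    have "B u = - A u" unfolding A_def B_def using Suc.prems by simp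
    then have "(B ^^ Suc m) u = - (B ^^ m) (A u)"
      by (simp add: funpow_swap1 module_hom.neg[OF mB])
    with IH show ?case by simp
  qed simp
  moreover obtain N where "(A ^^ N) u = 0"
    using u by (auto simp: gen_eigenspace_def A_def)
  ultimately have "(B ^^ N) u = 0" using opp by simp
  then show ?thesis by (auto simp: gen_eigenspace_def B_def)
qed

lemma vanishes_on_gen_eigenspaces:
  assumes F: "module_hom scale scale F"
    and Ta: "module_hom scale scale Ta" and Tb: "module_hom scale scale Tb"
    and comm: "\<And>x. Ta (Tb x) = Tb (Ta x)" and ann: "\<And>x. F (Ta x + Tb x) = 0"
    and l: "la + lb \<noteq> 0"
    and u: "u \<in> gen_eigenspace scale Ta la" "u \<in> gen_eigenspace scale Tb lb"
  shows "F u = 0"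
proof -
  define A where "A = (\<lambda>x. Ta x - la *s x)"
  define B where "B = (\<lambda>x. Tb x - lb *s x)"
  have A: "module_hom scale scale A" unfolding A_def by (rule module_hom_shift[OF Ta])
  have B: "module_hom scale scale B" unfolding B_def by (rule module_hom_shift[OF Tb])
  have AB: "A (B x) = B (A x)" for x
    unfolding A_def B_def
    by (simp add: module_hom.diff[OF Ta] module_hom.diff[OF Tb] module_hom.scale[OF Ta]
        module_hom.scale[OF Tb] comm algebra_simps)
  have "F u = 0" if "(A ^^ p) u = 0" "(B ^^ q) u = 0" for p q u
    using that
  proof (induction "p + q" arbitrary: p q u rule: less_induct)
    case less
    show ?case
    proof (cases "p = 0 \<or> q = 0")
      case True
      with less.prems show ?thesis by (auto simp: module_hom.zero[OF F])
    next
      case False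
      then obtain p' q' where pq: "p = Suc p'" "q = Suc q'" by (metis not0_implies_Suc)
      have "(B ^^ q) (A u) = 0"
        using less.prems(2) funpow_commute[of B A, OF AB[symmetric]] by (simp add: module_hom.zero[OF A])
      with less.prems(1) have FA: "F (A u) = 0"
        using less.hyps[of p' q "A u"] by (simp add: pq funpow_swap1)
      have "(A ^^ p) (B u) = 0"
        using less.prems(1) funpow_commute[of A B, OF AB] by (simp add: module_hom.zero[OF B])
      with less.prems(2) have FB: "F (B u) = 0"
        using less.hyps[of p q' "B u"] by (simp add: pq funpow_swap1)
      have "A u + B u = (Ta u + Tb u) - (la + lb) *s u"
        unfolding A_def B_def by (simp add: algebra_simps)
      then have "F (A u) + F (B u) = - ((la + lb) *s F u)"
        by (simp add: module_hom.add[OF F, symmetric] module_hom.diff[OF F] module_hom.scale[OF F] ann)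
      with FA FB l show ?thesis by simp
    qed
  qed
  with u show ?thesis by (auto simp: gen_eigenspace_def A_def B_def)
qed

end

context finite_dimensional_vector_space
begin

lemma exists_annihilating_poly:
  assumes T: "module_hom scale scale T"
  obtains p where "p \<noteq> 0" "poly_op scale T p w = 0"
proof -
  define f where "f j = (T ^^ j) w" for j
  show ?thesis
  proof (cases "inj_on f {..dimension}")
    case True
    have "dependent (f ` {..dimension})"
    proof (rule ccontr)
      assume "independent (f ` {..dimension})"
      then have "card (f ` {..dimension}) \<le> dimension"
        using independent_card_le_dim[of _ UNIV] by (simp add: dimension_def)
      with card_image[OF True] show False by simp
    qed
    then obtain c where c: "\<exists>v\<in>f ` {..dimension}. c v \<noteq> 0" "(\<Sum>v\<in>f ` {..dimension}. c v *s v) = 0"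
      using dependent_finite by blast
    define p where "p = (\<Sum>j\<le>dimension. monom (c (f j)) j)"
    have "coeff p j = (if j \<le> dimension then c (f j) else 0)" for j
      by (simp add: p_def coeff_sum)
    with c(1) have "p \<noteq> 0" by (metis atMost_iff imageE coeff_0)
    have "poly_op scale T p w = (\<Sum>j\<le>dimension. c (f j) *s f j)"
      by (simp add: p_def poly_op_sum[OF T] poly_op_monom f_def)
    also have "\<dots> = (\<Sum>v\<in>f ` {..dimension}. c v *s v)"
      by (simp add: sum.reindex[OF True])
    finally show ?thesis using \<open>p \<noteq> 0\<close> c(2) that by simp
  next
    case False
    then obtain j j' where j: "j \<noteq> j'" "f j = f j'" by (auto simp: inj_on_def)
    define q where "q = monom 1 j - monom (1::'a) j'"
    have "coeff q j = 1" using j(1) by (auto simp: q_def)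
    then have "q \<noteq> 0" by auto
    moreover have "poly_op scale T q w = 0"
      using j(2) by (simp add: q_def poly_op_diff[OF T] poly_op_monom f_def)
    ultimately show ?thesis using that by blast
  qed
qed

end

lemma complex_poly_split_root:
  fixes p :: "complex poly"
  assumes p: "p \<noteq> 0" "degree p \<noteq> 0"
  obtains l m g a b where "p = [:-l, 1:] ^ m * g" "m \<noteq> 0" "g \<noteq> 0" "degree g < degree p"
    "a * [:-l, 1:] ^ m + b * g = 1"
proof -
  obtain l where "poly p l = 0"
    using p(2) by (metis fundamental_theorem_of_algebra constant_degree)
  then have m: "order l p \<noteq> 0" using p(1) order_root by blast
  obtain g where pg: "p = [:-l, 1:] ^ order l p * g" and g: "\<not> [:-l, 1:] dvd g"
    using order_decomp[OF p(1)] by blast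
  have "coprime [:-l, 1:] g"
    using g by (simp add: prime_elem_imp_coprime prime_elem_linear_field_poly)
  then have "gcd ([:-l, 1:] ^ order l p) g = 1" by simp
  then obtain a b where ab: "a * [:-l, 1:] ^ order l p + b * g = 1"
    using bezout_coefficients_fst_snd by metis
  have "g \<noteq> 0" using p(1) pg by (metis mult_zero_right)
  then have "degree ([:-l, 1:] ^ order l p * g) = order l p + degree g"
    by (simp add: degree_mult_eq degree_linear_power)
  with m have "degree g < degree p" by (metis pg less_add_same_cancel2 not_gr_zero)
  then show ?thesis using that[OF pg m \<open>g \<noteq> 0\<close> _ ab] by blast
qed

locale complex_vector_space = vector_space scale
  for scale :: "complex \<Rightarrow> 'v::ab_group_add \<Rightarrow> 'v" (infixr \<open>*s\<close> 75)
begin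

text \<open>Bezout for the coprime factors of \<open>p = (X - l)^m g\<close> writes \<open>w\<close> as a component
  killed by \<open>(T - l)^m\<close> plus one killed by \<open>g(T)\<close>; induct on the latter.\<close>
lemma in_span_gen_eigenspaces_of_annihilated:
  assumes T: "module_hom scale scale T"
  shows "p \<noteq> 0 \<Longrightarrow> poly_op scale T p w = 0 \<Longrightarrow>
    w \<in> span {u. (\<exists>q. u = poly_op scale T q w) \<and> (\<exists>l. u \<in> gen_eigenspace scale T l)}"
proof (induction "degree p" arbitrary: p w rule: less_induct)
  case less
  define G where "G = {u. (\<exists>q. u = poly_op scale T q w) \<and> (\<exists>l. u \<in> gen_eigenspace scale T l)}"
  show ?case
  proof (cases "degree p = 0")
    case True
    then obtain c where "p = [:c:]" by (meson degree_eq_zeroE)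
    with less.prems have "w = 0" by (auto simp: poly_op_def)
    then show ?thesis by (simp only: span_zero)
  next
    case False
    obtain l m g a b where p: "p = [:-l, 1:] ^ m * g" and "m \<noteq> 0" "g \<noteq> 0"
      and "degree g < degree p" and ab: "a * [:-l, 1:] ^ m + b * g = 1"
      by (rule complex_poly_split_root[OF less.prems(1) False])
    define w1 where "w1 = poly_op scale T (a * [:-l, 1:] ^ m) w"
    define w2 where "w2 = poly_op scale T (b * g) w"
    have split: "w = w1 + w2"
      by (simp add: w1_def w2_def poly_op_add[OF T, symmetric] ab poly_op_1[OF T] flip: distrib_right)
    have p_w: "poly_op scale T (c * p) w = 0" for c
      by (simp add: poly_op_mult[OF T] less.prems(2) module_hom.zero[OF module_hom_poly_op[OF T]])
    have "((\<lambda>x. T x - l *s x) ^^ m) w2 = poly_op scale T (b * p) w"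
      by (simp add: w2_def p poly_op_linear_power[OF T, symmetric] poly_op_mult[OF T, symmetric]
          ac_simps)
    then have "w2 \<in> G" using p_w unfolding G_def gen_eigenspace_def w2_def by auto
    have "poly_op scale T g w1 = poly_op scale T (a * p) w"
      by (simp add: w1_def p poly_op_mult[OF T, symmetric] ac_simps)
    then have "w1 \<in> span {u. (\<exists>q. u = poly_op scale T q w1) \<and> (\<exists>l. u \<in> gen_eigenspace scale T l)}"
      using less.hyps[OF \<open>degree g < degree p\<close> \<open>g \<noteq> 0\<close>] p_w by simp
    moreover have "{u. (\<exists>q. u = poly_op scale T q w1) \<and> (\<exists>l. u \<in> gen_eigenspace scale T l)} \<subseteq> G"
      by (auto simp: G_def w1_def poly_op_mult[OF T, symmetric])
    ultimately have "w1 \<in> span G" using span_mono by blast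
    with \<open>w2 \<in> G\<close> have "w1 + w2 \<in> span G" by (simp add: span_add span_base)
    with split show ?thesis by (simp add: G_def)
  qed
qed

end

locale finite_dimensional_complex_vector_space =
  complex_vector_space scale + finite_dimensional_vector_space scale Basis
  for scale :: "complex \<Rightarrow> 'v::ab_group_add \<Rightarrow> 'v" (infixr \<open>*s\<close> 75) and Basis
begin

lemma in_span_gen_eigenspaces:
  assumes T: "module_hom scale scale T"
  shows "w \<in> span {u. (\<exists>q. u = poly_op scale T q w) \<and> (\<exists>l. u \<in> gen_eigenspace scale T l)}"
proof -
  obtain p where "p \<noteq> 0" "poly_op scale T p w = 0"
    using exists_annihilating_poly[OF T] .
  then show ?thesis by (rule in_span_gen_eigenspaces_of_annihilated[OF T])
qed

end

context finite_dimensional_complex_vector_space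
begin

lemma in_span_antidiagonal_gen_eigenspaces:
  assumes Y: "\<And>j. j \<in> J \<Longrightarrow> module_hom scale scale (Y j)"
    and Y_commute: "\<And>j j' x. j \<in> J \<Longrightarrow> j' \<in> J \<Longrightarrow> Y j (Y j' x) = Y j' (Y j x)"
    and P: "module_hom scale scale P" and PY: "\<And>x. P (Y ka x) = Y ka (P x)"
    and ka: "ka \<in> J" and kb: "kb \<in> J" "kb \<noteq> ka"
    and w: "P w = w" "Y ka w + Y kb w = 0"
      "\<And>j. j \<in> J - {ka, kb} \<Longrightarrow> w \<in> gen_eigenspace scale (Y j) (i j)"
  shows "w \<in> span {u. P u = u \<and>
    (\<exists>l. \<forall>j\<in>J. u \<in> gen_eigenspace scale (Y j) ((i(ka := l, kb := - l)) j))}"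
proof -
  have Ya: "module_hom scale scale (Y ka)" and Yb: "module_hom scale scale (Y kb)"
    using Y ka kb by auto
  have "{u. (\<exists>q. u = poly_op scale (Y ka) q w) \<and> (\<exists>l. u \<in> gen_eigenspace scale (Y ka) l)}
    \<subseteq> {u. P u = u \<and> (\<exists>l. \<forall>j\<in>J. u \<in> gen_eigenspace scale (Y j) ((i(ka := l, kb := - l)) j))}"
  proof clarify
    fix q l
    define u where "u = poly_op scale (Y ka) q w"
    assume l: "poly_op scale (Y ka) q w \<in> gen_eigenspace scale (Y ka) l"
    have Q: "module_hom scale scale (poly_op scale (Y ka) q)" by (rule module_hom_poly_op[OF Ya])
    have "Y kb u = - Y ka u"
    proof -
      have "Y kb u = poly_op scale (Y ka) q (Y kb w)"
        unfolding u_def by (rule poly_op_commute[OF Ya Yb]) (rule Y_commute[OF kb(1) ka])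
      also have "Y kb w = - Y ka w" using w(2) by (simp add: eq_neg_iff_add_eq_0 add.commute)
      finally show ?thesis
        by (simp add: module_hom.neg[OF Q] u_def poly_op_commute[OF Ya Ya])
    qed
    have "u \<in> gen_eigenspace scale (Y j) ((i(ka := l, kb := - l)) j)" if j: "j \<in> J" for j
    proof -
      consider "j = ka" | "j = kb" | "j \<in> J - {ka, kb}" using j by blast
      then show ?thesis
      proof cases
        case 1
        then show ?thesis using l kb(2) by (simp add: u_def)
      next
        case 2
        then show ?thesis
          using gen_eigenspace_opposite[OF Ya Yb _ \<open>Y kb u = - Y ka u\<close>] Y_commute[OF ka kb(1)] l
          by (simp add: u_def)
      next
        case 3
        have "poly_op scale (Y ka) q (Y j x) = Y j (poly_op scale (Y ka) q x)" for x
          by (rule poly_op_commute[OF Ya Y[OF j], symmetric]) (rule Y_commute[OF j ka])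
        with 3 show ?thesis
          using gen_eigenspace_map_commute[OF Q _ w(3)[OF 3]] by (simp add: u_def)
      qed
    qed
    moreover have "P u = u" unfolding u_def by (simp add: poly_op_commute[OF Ya P] PY w(1))
    ultimately show "P (poly_op scale (Y ka) q w) = poly_op scale (Y ka) q w \<and>
      (\<exists>l. \<forall>j\<in>J. poly_op scale (Y ka) q w \<in> gen_eigenspace scale (Y j) ((i(ka := l, kb := - l)) j))"
      unfolding u_def by blast
  qed
  with in_span_gen_eigenspaces[OF Ya, of w] show ?thesis using span_mono by blast
qed

end

lemma length_seq_swap [simp]: "length (seq_swap k a) = length a"
  by (simp add: seq_swap_def)

lemma nth_seq_swap: "j < length a \<Longrightarrow> seq_swap k a ! j = a ! (sw k (j + 1) - 1)"
  by (simp add: seq_swap_def)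

lemma seq_swap_eq_self: "1 \<le> k \<Longrightarrow> ent a k = ent a (k + 1) \<Longrightarrow> seq_swap k a = a"
  by (rule nth_equalityI) (auto simp: nth_seq_swap sw_def)

lemma finite_Seq: "finite (Seq r t)"
proof (rule finite_subset)
  show "Seq r t \<subseteq> {xs. set xs \<subseteq> UNIV \<and> length xs = r + t}" by (auto simp: Seq_def)
qed (rule finite_lists_length_eq, simp)

lemma seq_swap_in_Seq:
  assumes a: "a \<in> Seq r t" and k: "k \<in> {1..r + t - 1}"
  shows "seq_swap k a \<in> Seq r t"
proof -
  have la: "length a = r + t" using a by (simp add: Seq_def)
  have "seq_swap k a = a[k - 1 := a ! k, k := a ! (k - 1)]"
    using k la by (intro nth_equalityI) (auto simp: nth_seq_swap sw_def nth_list_update)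
  then have "mset (seq_swap k a) = mset a"
    by (simp only:) (rule mset_swap, use k la in auto)
  then have "length (filter id (seq_swap k a)) = length (filter id a)"
    by (metis mset_filter size_mset)
  then show ?thesis using a by (simp add: Seq_def)
qed

lemma id_d_in_Diags: "a \<in> Seq r t \<Longrightarrow> id_d a \<in> Diags r t"
  by (auto simp: Diags_def is_diag_def id_d_def restr_def pts_def Seq_def)

lemma fst_e_d [simp]: "fst (e_d k a) = a"
  and fst_snd_e_d [simp]: "fst (snd (e_d k a)) = a"
  and fst_eh_d [simp]: "fst (eh_d k a) = a"
  and fst_snd_eh_d [simp]: "fst (snd (eh_d k a)) = seq_swap k a"
  by (simp_all add: e_d_def eh_d_def)

lemma e_d_in_Diags:
  assumes a: "a \<in> Seq r t" and k: "k \<in> {1..r + t - 1}" and ak: "ent a k \<noteq> ent a (k + 1)"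
  shows "e_d k a \<in> Diags r t"
proof -
  have "length a = r + t" using a by (simp add: Seq_def)
  with a k ak show ?thesis
    by (auto simp: Diags_def is_diag_def e_d_def restr_def pts_def sw_def split: if_splits)
qed

lemma eh_d_in_Diags:
  assumes a: "a \<in> Seq r t" and k: "k \<in> {1..r + t - 1}" and ak: "ent a k \<noteq> ent a (k + 1)"
  shows "eh_d k a \<in> Diags r t"
proof -
  have "length a = r + t" using a by (simp add: Seq_def)
  with a k ak seq_swap_in_Seq[OF a k] show ?thesis
    by (auto simp: Diags_def is_diag_def eh_d_def restr_def pts_def sw_def nth_seq_swap
        split: if_splits)
qed

definition antidiagonal_weights :: "nat \<Rightarrow> nat \<Rightarrow> (nat \<Rightarrow> complex) \<Rightarrow> (nat \<Rightarrow> complex) set" where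
  "antidiagonal_weights n k i = {i'. (\<forall>j\<in>{1..n} - {k, k + 1}. i' j = i j) \<and> i' k + i' (k + 1) = 0}"

locale vbr_module =
  fixes r t :: nat and \<omega> :: "nat \<Rightarrow> complex"
    and scale :: "complex \<Rightarrow> 'v::ab_group_add \<Rightarrow> 'v" and Basis :: "'v set"
    and rho :: "diag \<Rightarrow> 'v \<Rightarrow> 'v" and Y :: "nat \<Rightarrow> 'v \<Rightarrow> 'v"
  assumes VBr_module: "VBr_module r t \<omega> scale Basis rho Y"
begin

sublocale finite_dimensional_complex_vector_space scale Basis
  using VBr_module by (simp add: VBr_module_def complex_vector_space_def
      finite_dimensional_vector_space_def finite_dimensional_complex_vector_space_def)

lemma rho_linear: "d \<in> Diags r t \<Longrightarrow> module_hom scale scale (rho d)"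
  using VBr_module by (simp add: VBr_module_def module_hom_iff_linear)

lemma rho_rho_not_composable:
  "d1 \<in> Diags r t \<Longrightarrow> d2 \<in> Diags r t \<Longrightarrow> \<not> composable d1 d2 \<Longrightarrow> rho d1 (rho d2 v) = 0"
  using VBr_module by (simp add: VBr_module_def)

lemma sum_rho_id: "(\<Sum>a\<in>Seq r t. rho (id_d a) v) = v"
  using VBr_module by (simp add: VBr_module_def)

lemma Y_linear: "j \<in> {1..r + t} \<Longrightarrow> module_hom scale scale (Y j)"
  using VBr_module by (simp add: VBr_module_def module_hom_iff_linear)

lemma Y_commute: "j \<in> {1..r + t} \<Longrightarrow> j' \<in> {1..r + t} \<Longrightarrow> Y j (Y j' x) = Y j' (Y j x)"
  using VBr_module unfolding VBr_module_def by blast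

lemma rho_id_Y_commute:
  "j \<in> {1..r + t} \<Longrightarrow> b \<in> Seq r t \<Longrightarrow> rho (id_d b) (Y j x) = Y j (rho (id_d b) x)"
  using VBr_module unfolding VBr_module_def by metis

lemma Y_opE_commute:
  "j \<in> {1..r + t} \<Longrightarrow> k \<in> {1..r + t - 1} \<Longrightarrow> j \<noteq> k \<Longrightarrow> j \<noteq> k + 1 \<Longrightarrow>
    Y j (opE r t rho k x) = opE r t rho k (Y j x)"
  and Y_opEh_commute:
  "j \<in> {1..r + t} \<Longrightarrow> k \<in> {1..r + t - 1} \<Longrightarrow> j \<noteq> k \<Longrightarrow> j \<noteq> k + 1 \<Longrightarrow>
    Y j (opEh r t rho k x) = opEh r t rho k (Y j x)"
  using VBr_module unfolding VBr_module_def by blast+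

lemma opE_Y_sum: "k \<in> {1..r + t - 1} \<Longrightarrow> opE r t rho k (Y k x + Y (k + 1) x) = 0"
  and Y_sum_opE: "k \<in> {1..r + t - 1} \<Longrightarrow> Y k (opE r t rho k x) + Y (k + 1) (opE r t rho k x) = 0"
  and opEh_Y_sum: "k \<in> {1..r + t - 1} \<Longrightarrow> opEh r t rho k (Y k x + Y (k + 1) x) = 0"
  and Y_sum_opEh: "k \<in> {1..r + t - 1} \<Longrightarrow> Y k (opEh r t rho k x) + Y (k + 1) (opEh r t rho k x) = 0"
  using VBr_module unfolding VBr_module_def by blast+

lemma rho_id_d_source_ne: "d \<in> Diags r t \<Longrightarrow> a \<in> Seq r t \<Longrightarrow> fst d \<noteq> a \<Longrightarrow> rho d (rho (id_d a) v) = 0"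
  using id_d_in_Diags[of a r t]
  by (intro rho_rho_not_composable) (auto simp: composable_def id_d_def)

lemma rho_id_d_target: "d \<in> Diags r t \<Longrightarrow> rho (id_d (fst (snd d))) (rho d w) = rho d w"
proof -
  assume d: "d \<in> Diags r t"
  define b where "b = fst (snd d)"
  have b: "b \<in> Seq r t" using d by (auto simp: b_def Diags_def is_diag_def)
  have "rho (id_d a) (rho d w) = 0" if "a \<in> Seq r t - {b}" for a
    using that d id_d_in_Diags[of a r t]
    by (intro rho_rho_not_composable) (auto simp: composable_def id_d_def b_def)
  then have "rho d w = rho (id_d b) (rho d w)"
    using sum_rho_id[of "rho d w"] sum.remove[OF finite_Seq b, of "\<lambda>a. rho (id_d a) (rho d w)"]
    by simp
  then show ?thesis by (simp add: b_def)
qed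

lemma sum_rho_eq_summand:
  assumes A: "finite A" "a \<in> A" "a \<in> Seq r t"
    and D: "\<And>a'. a' \<in> A \<Longrightarrow> dk a' \<in> Diags r t \<and> fst (dk a') = a'"
    and v: "rho (id_d a) v = v"
  shows "(\<Sum>a'\<in>A. rho (dk a') v) = rho (dk a) v"
proof -
  have "rho (dk a') v = 0" if "a' \<in> A - {a}" for a'
    using that D[of a'] rho_id_d_source_ne[of "dk a'" a v] A(3) v by auto
  then show ?thesis using sum.remove[OF A(1,2), of "\<lambda>a'. rho (dk a') v"] by simp
qed

lemma module_hom_sum_rho:
  "(\<And>a. a \<in> A \<Longrightarrow> dk a \<in> Diags r t) \<Longrightarrow> module_hom scale scale (\<lambda>v. \<Sum>a\<in>A. rho (dk a) v)"
  by (auto simp: module_hom_self_iff module_hom.add[OF rho_linear] module_hom.scale[OF rho_linear]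
      sum.distrib scale_sum_right intro!: sum.cong)

context
  fixes k assumes k: "k \<in> {1..r + t - 1}"
begin

lemma opE_linear: "module_hom scale scale (opE r t rho k)"
  unfolding opE_def[abs_def] by (rule module_hom_sum_rho) (use e_d_in_Diags[OF _ k] in auto)

lemma opEh_linear: "module_hom scale scale (opEh r t rho k)"
  unfolding opEh_def[abs_def] by (rule module_hom_sum_rho) (use eh_d_in_Diags[OF _ k] in auto)

end

lemma mem_wsp_iff:
  "v \<in> wsp r t scale rho Y a i \<longleftrightarrow>
    rho (id_d a) v = v \<and> (\<forall>j\<in>{1..r + t}. v \<in> gen_eigenspace scale (Y j) (i j))"
  by (simp add: wsp_def gen_eigenspace_def)

lemma vanishes_on_wsp:
  assumes F: "module_hom scale scale F" and ann: "\<And>x. F (Y k x + Y (k + 1) x) = 0"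
    and k: "k \<in> {1..r + t - 1}" and i: "i k + i (k + 1) \<noteq> 0"
    and v: "v \<in> wsp r t scale rho Y a i"
  shows "F v = 0"
proof -
  have kk: "k \<in> {1..r + t}" "k + 1 \<in> {1..r + t}" using k by auto
  show ?thesis
  proof (rule vanishes_on_gen_eigenspaces[OF F Y_linear[OF kk(1)] Y_linear[OF kk(2)]])
    show "Y k (Y (k + 1) x) = Y (k + 1) (Y k x)" for x by (rule Y_commute[OF kk])
  qed (use ann i v kk in \<open>auto simp: mem_wsp_iff\<close>)
qed

lemma in_span_wsp:
  assumes F: "module_hom scale scale F" and b: "b \<in> Seq r t"
    and FY: "\<And>j x. j \<in> {1..r + t} - {k, k + 1} \<Longrightarrow> Y j (F x) = F (Y j x)"
    and ann: "\<And>x. Y k (F x) + Y (k + 1) (F x) = 0"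
    and Fv: "rho (id_d b) (F v) = F v"
    and k: "k \<in> {1..r + t - 1}" and v: "v \<in> wsp r t scale rho Y a i"
  shows "F v \<in> span (\<Union>i'\<in>antidiagonal_weights (r + t) k i. wsp r t scale rho Y b i')"
proof -
  have kk: "k \<in> {1..r + t}" "k + 1 \<in> {1..r + t}" using k by auto
  have eig: "F v \<in> gen_eigenspace scale (Y j) (i j)" if j: "j \<in> {1..r + t} - {k, k + 1}" for j
    using gen_eigenspace_map_commute[OF F _, of "Y j" v "i j"] FY[OF j] v j
    by (simp add: mem_wsp_iff)
  have "F v \<in> span {u. rho (id_d b) u = u \<and>
      (\<exists>l. \<forall>j\<in>{1..r + t}. u \<in> gen_eigenspace scale (Y j) ((i(k := l, k + 1 := - l)) j))}"
    using Fv ann eig kk rho_id_Y_commute[OF kk(1) b]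
    by (intro in_span_antidiagonal_gen_eigenspaces[OF Y_linear Y_commute
          rho_linear[OF id_d_in_Diags[OF b]]]) auto
  moreover have "{u. rho (id_d b) u = u \<and>
      (\<exists>l. \<forall>j\<in>{1..r + t}. u \<in> gen_eigenspace scale (Y j) ((i(k := l, k + 1 := - l)) j))}
    \<subseteq> (\<Union>i'\<in>antidiagonal_weights (r + t) k i. wsp r t scale rho Y b i')"
  proof clarify
    fix u l
    assume "rho (id_d b) u = u"
      "\<forall>j\<in>{1..r + t}. u \<in> gen_eigenspace scale (Y j) ((i(k := l, k + 1 := - l)) j)"
    then have "u \<in> wsp r t scale rho Y b (i(k := l, k + 1 := - l))" by (simp add: mem_wsp_iff)
    moreover have "i(k := l, k + 1 := - l) \<in> antidiagonal_weights (r + t) k i"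
      by (simp add: antidiagonal_weights_def)
    ultimately show "u \<in> (\<Union>i'\<in>antidiagonal_weights (r + t) k i. wsp r t scale rho Y b i')"
      by blast
  qed
  ultimately show ?thesis using span_mono by blast
qed

context
  fixes a k
  assumes a: "a \<in> Seq r t" and k: "k \<in> {1..r + t - 1}" and ak: "ent a k \<noteq> ent a (k + 1)"
begin

lemma opE_on_wsp: "v \<in> wsp r t scale rho Y a i \<Longrightarrow> opE r t rho k v = rho (e_d k a) v"
  unfolding opE_def using a ak e_d_in_Diags[OF _ k]
  by (intro sum_rho_eq_summand) (auto simp: finite_Seq mem_wsp_iff)

lemma opEh_on_wsp: "v \<in> wsp r t scale rho Y a i \<Longrightarrow> opEh r t rho k v = rho (eh_d k a) v"
  unfolding opEh_def using a ak eh_d_in_Diags[OF _ k]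
  by (intro sum_rho_eq_summand) (auto simp: finite_Seq mem_wsp_iff)

lemma e_vanishes_on_wsp:
  assumes "i k + i (k + 1) \<noteq> 0" and v: "v \<in> wsp r t scale rho Y a i"
  shows "rho (e_d k a) v = 0"
  using vanishes_on_wsp[OF opE_linear[OF k] opE_Y_sum[OF k] k assms] opE_on_wsp[OF v] by simp

lemma eh_vanishes_on_wsp:
  assumes "i k + i (k + 1) \<noteq> 0" and v: "v \<in> wsp r t scale rho Y a i"
  shows "rho (eh_d k a) v = 0"
  using vanishes_on_wsp[OF opEh_linear[OF k] opEh_Y_sum[OF k] k assms] opEh_on_wsp[OF v] by simp

lemma e_in_span_wsp:
  assumes v: "v \<in> wsp r t scale rho Y a i"
  shows "rho (e_d k a) v \<in> span (\<Union>i'\<in>antidiagonal_weights (r + t) k i. wsp r t scale rho Y a i')"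
proof -
  have E: "opE r t rho k v = rho (e_d k a) v" by (rule opE_on_wsp[OF v])
  have "rho (id_d a) (opE r t rho k v) = opE r t rho k v"
    using rho_id_d_target[OF e_d_in_Diags[OF a k ak]] by (simp add: E)
  from in_span_wsp[OF opE_linear[OF k] a _ Y_sum_opE[OF k] this k v] Y_opE_commute[OF _ k]
  show ?thesis unfolding E by blast
qed

lemma eh_in_span_wsp:
  assumes v: "v \<in> wsp r t scale rho Y a i"
  shows "rho (eh_d k a) v \<in>
    span (\<Union>i'\<in>antidiagonal_weights (r + t) k i. wsp r t scale rho Y (seq_swap k a) i')"
proof -
  have E: "opEh r t rho k v = rho (eh_d k a) v" by (rule opEh_on_wsp[OF v])
  have "rho (id_d (seq_swap k a)) (opEh r t rho k v) = opEh r t rho k v"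
    using rho_id_d_target[OF eh_d_in_Diags[OF a k ak]] by (simp add: E)
  from in_span_wsp[OF opEh_linear[OF k] seq_swap_in_Seq[OF a k] _ Y_sum_opEh[OF k] this k v]
    Y_opEh_commute[OF _ k]
  show ?thesis unfolding E by blast
qed

end

end

theorem lemma3p2:
  fixes r t :: nat and \<omega> :: "nat \<Rightarrow> complex"
    and scale :: "complex \<Rightarrow> 'v::ab_group_add \<Rightarrow> 'v" and B :: "'v set"
    and rho :: "diag \<Rightarrow> 'v \<Rightarrow> 'v" and Y :: "nat \<Rightarrow> 'v \<Rightarrow> 'v"
    and a :: "bool list" and k :: nat and i :: "nat \<Rightarrow> complex"
  assumes M: "VBr_module r t \<omega> scale B rho Y"
    and a: "a \<in> Seq r t"
    and k: "k \<in> {1..r + t - 1}"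
    and sk: "seq_swap k a \<noteq> a"
  defines "I \<equiv> {i'. (\<forall>j\<in>{1..r + t} - {k, k + 1}. i' j = i j) \<and> i' k + i' (k + 1) = 0}"
  shows "(i k + i (k + 1) \<noteq> 0 \<longrightarrow>
            (\<forall>v\<in>wsp r t scale rho Y a i. rho (e_d k a) v = 0) \<and>
            (\<forall>v\<in>wsp r t scale rho Y a i. rho (eh_d k a) v = 0))
       \<and> (i k + i (k + 1) = 0 \<longrightarrow>
            (\<forall>v\<in>wsp r t scale rho Y a i.
               rho (e_d k a) v \<in> module.span scale (\<Union>i'\<in>I. wsp r t scale rho Y a i')) \<and>
            (\<forall>v\<in>wsp r t scale rho Y a i.
               rho (eh_d k a) v \<in> module.span scale (\<Union>i'\<in>I. wsp r t scale rho Y (seq_swap k a) i')))"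
proof -
  interpret vbr_module r t \<omega> scale B rho Y by (rule vbr_module.intro[OF M])
  have ak: "ent a k \<noteq> ent a (k + 1)" using sk seq_swap_eq_self k by auto
  show ?thesis
    unfolding I_def antidiagonal_weights_def[symmetric]
    using e_vanishes_on_wsp[OF a k ak] eh_vanishes_on_wsp[OF a k ak]
      e_in_span_wsp[OF a k ak] eh_in_span_wsp[OF a k ak]
    by blast
qed

end
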